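(* Let $G$ be a profinite group, written as the inverse limit $G = \varprojlim G_i$ of its finite quotients $G_i$, and let $H$ be a finite discrete abelian group. Then $H^2_{\mathrm{ts}}(G,H) = \varprojlim H^2_{\mathrm{ts}}(G_i,H)$.
   Context: A profinite group is a topological group isomorphic to an inverse limit of finite groups, with the inverse limit topology. For a topological group $G$ and an abelian topological group $H$, the topo-symmetric cohomology is $H^2_{\mathrm{ts}}(G,H) = Z^2_{\mathrm{ts}}(G,H)/B^2_{\mathrm{ts}}(G,H)$, where $Z^2_{\mathrm{ts}}(G,H)$ is the set of continuous 2-cocycles $c \in Z^2(G,H)$ satisfying $c(g,h) = c(h,g)$ for all $g,h \in G$, and $B^2_{\mathrm{ts}}(G,H)$ the coboundaries among them; it is a subgroup of the continuous cohomology group $H^2(G,H)$. *)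

theory Defs
  imports "HOL-Algebra.Algebra" "HOL-Analysis.Analysis"
begin

definition topological_group :: "('g,'a) monoid_scheme \<Rightarrow> 'g topology \<Rightarrow> bool" where
  "topological_group G T \<longleftrightarrow> group G \<and> topspace T = carrier G
     \<and> continuous_map (prod_topology T T) T (\<lambda>(x,y). x \<otimes>\<^bsub>G\<^esub> y)
     \<and> continuous_map T T (\<lambda>x. inv\<^bsub>G\<^esub> x)"

definition fin_quots :: "('g,'a) monoid_scheme \<Rightarrow> 'g topology \<Rightarrow> 'g set set" where
  "fin_quots G T = {N. N \<lhd> G \<and> openin T N \<and> finite (carrier (G Mod N))}"

text \<open>The inverse limit of the finite quotients G/N, as the set of compatible families of
  cosets (compatibility: for M \<subseteq> N the projection G/M \<rightarrow> G/N maps x M to x N, i.e.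
  x M \<subseteq> x N), with the subspace topology of the product of the discrete spaces G/N.\<close>
definition quot_limit :: "('g,'a) monoid_scheme \<Rightarrow> 'g topology \<Rightarrow> ('g set \<Rightarrow> 'g set) set" where
  "quot_limit G T = {x \<in> (\<Pi>\<^sub>E N\<in>fin_quots G T. carrier (G Mod N)).
      \<forall>N\<in>fin_quots G T. \<forall>M\<in>fin_quots G T. M \<subseteq> N \<longrightarrow> x M \<subseteq> x N}"

definition quot_limit_topology :: "('g,'a) monoid_scheme \<Rightarrow> 'g topology \<Rightarrow> ('g set \<Rightarrow> 'g set) topology" where
  "quot_limit_topology G T = subtopology
     (product_topology (\<lambda>N. discrete_topology (carrier (G Mod N))) (fin_quots G T))
     (quot_limit G T)"

text \<open>Profinite group: a topological group whose canonical map to the inverse limit of its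
  finite quotients is a homeomorphism (it is automatically a group homomorphism).\<close>
definition profinite_group :: "('g,'a) monoid_scheme \<Rightarrow> 'g topology \<Rightarrow> bool" where
  "profinite_group G T \<longleftrightarrow> topological_group G T \<and>
     homeomorphic_map T (quot_limit_topology G T) (\<lambda>g. \<lambda>N\<in>fin_quots G T. N #>\<^bsub>G\<^esub> g)"

text \<open>Continuous symmetric 2-cocycles of K (with topology TK) with values in the discrete abelian
  group H, trivial action.\<close>
definition Z2ts :: "('k,'a) monoid_scheme \<Rightarrow> 'k topology \<Rightarrow> ('h,'b) monoid_scheme \<Rightarrow> ('k \<times> 'k \<Rightarrow> 'h) set" where
  "Z2ts K TK H = {c. c \<in> carrier K \<times> carrier K \<rightarrow>\<^sub>E carrier H
     \<and> continuous_map (prod_topology TK TK) (discrete_topology (carrier H)) c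
     \<and> (\<forall>g\<in>carrier K. \<forall>h\<in>carrier K. \<forall>k\<in>carrier K.
          c (h, k) \<otimes>\<^bsub>H\<^esub> c (g, h \<otimes>\<^bsub>K\<^esub> k) = c (g \<otimes>\<^bsub>K\<^esub> h, k) \<otimes>\<^bsub>H\<^esub> c (g, h))
     \<and> (\<forall>g\<in>carrier K. \<forall>h\<in>carrier K. c (g, h) = c (h, g))}"

definition B2ts :: "('k,'a) monoid_scheme \<Rightarrow> 'k topology \<Rightarrow> ('h,'b) monoid_scheme \<Rightarrow> ('k \<times> 'k \<Rightarrow> 'h) set" where
  "B2ts K TK H = {c \<in> Z2ts K TK H. \<exists>f \<in> carrier K \<rightarrow>\<^sub>E carrier H.
     continuous_map TK (discrete_topology (carrier H)) f \<and>
     (\<forall>g\<in>carrier K. \<forall>h\<in>carrier K. c (g, h) = f g \<otimes>\<^bsub>H\<^esub> f h \<otimes>\<^bsub>H\<^esub> inv\<^bsub>H\<^esub> (f (g \<otimes>\<^bsub>K\<^esub> h)))}"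

text \<open>Two cocycles define the same class in H^2_ts = Z2ts / B2ts.\<close>
definition cohomologous :: "('k,'a) monoid_scheme \<Rightarrow> 'k topology \<Rightarrow> ('h,'b) monoid_scheme
    \<Rightarrow> ('k \<times> 'k \<Rightarrow> 'h) \<Rightarrow> ('k \<times> 'k \<Rightarrow> 'h) \<Rightarrow> bool" where
  "cohomologous K TK H c d \<longleftrightarrow> c \<in> Z2ts K TK H \<and> d \<in> Z2ts K TK H \<and>
     (\<lambda>x\<in>carrier K \<times> carrier K. c x \<otimes>\<^bsub>H\<^esub> inv\<^bsub>H\<^esub> (d x)) \<in> B2ts K TK H"

definition inflate :: "('l \<Rightarrow> 'k) \<Rightarrow> ('l,'a) monoid_scheme \<Rightarrow> ('k \<times> 'k \<Rightarrow> 'h) \<Rightarrow> ('l \<times> 'l \<Rightarrow> 'h)" where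
  "inflate p K' c = (\<lambda>x\<in>carrier K' \<times> carrier K'. c (p (fst x), p (snd x)))"

abbreviation quot_top :: "('g,'a) monoid_scheme \<Rightarrow> 'g set \<Rightarrow> 'g set topology" where
  "quot_top G N \<equiv> discrete_topology (carrier (G Mod N))"

end

theory Submission
  imports Defs
begin

text \<open>A continuous cochain with values in the discrete group H is a locally constant function on
  the compact space G or G \<times> G, hence constant on the cosets of a single open normal subgroup of
  finite index. Thus every continuous symmetric cocycle on G is inflated from a finite quotient;
  and if an inflated cocycle is the coboundary of a continuous 1-cochain f on G, then f is itself
  inflated from some finite quotient G/M, so the class already dies on G/M.\<close>

section \<open>Open normal subgroups of finite index\<close>

lemma fin_quots_subgroup:
  "N \<in> fin_quots G T \<Longrightarrow> subgroup N G"
  by (auto simp: fin_quots_def normal_imp_subgroup)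

lemma carrier_Mod_eq_image_rcos:
  "carrier (G Mod N) = (\<lambda>g. N #>\<^bsub>G\<^esub> g) ` carrier G"
  by (auto simp: FactGroup_def RCOSETS_def)

lemma rcos_hom_Mod:
  "N \<in> fin_quots G T \<Longrightarrow> (\<lambda>g. N #>\<^bsub>G\<^esub> g) \<in> hom G (G Mod N)"
  by (simp add: fin_quots_def normal.r_coset_hom_Mod)

lemma fin_quots_Int:
  fixes G (structure)
  assumes "group G" "N1 \<in> fin_quots G T" "N2 \<in> fin_quots G T"
  shows "N1 \<inter> N2 \<in> fin_quots G T"
proof -
  interpret group G by fact
  have n: "N1 \<lhd> G" "N2 \<lhd> G" using assms by (auto simp: fin_quots_def)
  have s: "subgroup N1 G" "subgroup N2 G" using n normal_imp_subgroup by auto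
  have "(N1 \<inter> N2) #> g = (N1 #> g) \<inter> (N2 #> g)" if "g \<in> carrier G" for g
    using that s by (auto simp: r_coset_def subgroup.mem_carrier)
  then have "rcosets (N1 \<inter> N2) \<subseteq> (\<lambda>(A, B). A \<inter> B) ` ((rcosets N1) \<times> (rcosets N2))"
    using s by (force simp: RCOSETS_def)
  moreover have "finite ((rcosets N1) \<times> (rcosets N2))"
    using assms by (auto simp: fin_quots_def FactGroup_def)
  ultimately have "finite (rcosets (N1 \<inter> N2))" by (meson finite_imageI finite_subset)
  then show ?thesis using assms normal_subgroup_intersect[OF n]
    by (auto simp: fin_quots_def FactGroup_def)
qed

lemma carrier_in_fin_quots:
  fixes G (structure)
  assumes "topological_group G T"
  shows "carrier G \<in> fin_quots G T"
proof -
  interpret group G using assms by (simp add: topological_group_def)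
  have "rcosets (carrier G) = {carrier G}"
    using coset_join2[OF _ subgroup_self] by (auto simp: RCOSETS_def)
  moreover have "openin T (carrier G)"
    using assms by (metis openin_topspace topological_group_def)
  ultimately show ?thesis
    by (auto simp: fin_quots_def FactGroup_def normal_inv_iff subgroup_self)
qed

lemma fin_quots_Inter:
  fixes G (structure)
  assumes "topological_group G T" "finite F" "F \<subseteq> fin_quots G T"
  shows "carrier G \<inter> \<Inter>F \<in> fin_quots G T"
  using assms(2,3)
proof (induction F rule: finite_induct)
  case empty
  then show ?case using carrier_in_fin_quots[OF assms(1)] by simp
next
  case (insert N F)
  have "carrier G \<inter> \<Inter>(insert N F) = N \<inter> (carrier G \<inter> \<Inter>F)" by auto
  then show ?case
    using insert fin_quots_Int assms(1) by (auto simp: topological_group_def)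
qed

lemma rcos_eq_coarsen:
  fixes G (structure)
  assumes "group G" "subgroup M G" "subgroup N G" "M \<subseteq> N"
    and "g \<in> carrier G" "g' \<in> carrier G" "M #> g = M #> g'"
  shows "N #> g = N #> g'"
proof -
  interpret group G by fact
  have "g \<in> M #> g'" using rcos_self[OF assms(5,2)] assms(7) by simp
  then have "g \<in> N #> g'" using assms(4) by (auto simp: r_coset_def)
  then show ?thesis using repr_independence[OF _ assms(6,3)] by simp
qed

lemma set_mult_rcos_coarsen:
  fixes G (structure)
  assumes "group G" "subgroup M G" "subgroup N G" "M \<subseteq> N" "g \<in> carrier G"
  shows "N <#> (M #> g) = N #> g"
proof -
  interpret group G by fact
  have "N <#> M = N"
  proof
    show "N <#> M \<subseteq> N"
      using assms(3,4) subgroup.m_closed by (fastforce simp: set_mult_def)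
    show "N \<subseteq> N <#> M"
      using assms(2,3) by (force simp: set_mult_def intro: subgroup.one_closed
          dest: subgroup.mem_carrier)
  qed
  then show ?thesis
    using setmult_rcos_assoc assms subgroup.subset by metis
qed

lemma set_mult_rcos_hom_Mod:
  fixes G (structure)
  assumes "group G" "M \<lhd> G" "N \<lhd> G" "M \<subseteq> N"
  shows "(\<lambda>C. N <#> C) \<in> hom (G Mod M) (G Mod N)"
proof -
  interpret group G by fact
  have sub: "subgroup M G" "subgroup N G" using assms(2,3) normal_imp_subgroup by auto
  have img: "N <#> (M #> g) = N #> g" if "g \<in> carrier G" for g
    using set_mult_rcos_coarsen[OF assms(1) sub assms(4) that] .
  show ?thesis
  proof (rule homI)
    fix A assume "A \<in> carrier (G Mod M)"
    then show "N <#> A \<in> carrier (G Mod N)"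
      using img by (auto simp: carrier_Mod_eq_image_rcos[of G])
  next
    fix A B assume "A \<in> carrier (G Mod M)" "B \<in> carrier (G Mod M)"
    then obtain g h where "g \<in> carrier G" "h \<in> carrier G" "A = M #> g" "B = M #> h"
      by (auto simp: carrier_Mod_eq_image_rcos[of G])
    then show "N <#> (A \<otimes>\<^bsub>G Mod M\<^esub> B) = (N <#> A) \<otimes>\<^bsub>G Mod N\<^esub> (N <#> B)"
      using img normal.rcos_sum[OF assms(2)] normal.rcos_sum[OF assms(3)] by simp
  qed
qed

section \<open>The topology of a profinite group\<close>

lemma profinite_groupD:
  assumes "profinite_group G T"
  shows "group G" "topspace T = carrier G" "topological_group G T"
    and "homeomorphic_map T (quot_limit_topology G T) (\<lambda>g. \<lambda>N\<in>fin_quots G T. N #>\<^bsub>G\<^esub> g)"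
  using assms by (auto simp: profinite_group_def topological_group_def)

lemma continuous_map_rcos:
  assumes "profinite_group G T" "N \<in> fin_quots G T"
  shows "continuous_map T (quot_top G N) (\<lambda>g. N #>\<^bsub>G\<^esub> g)"
proof -
  let ?\<phi> = "\<lambda>g. \<lambda>N\<in>fin_quots G T. N #>\<^bsub>G\<^esub> g"
  have "continuous_map T (product_topology (quot_top G) (fin_quots G T)) ?\<phi>"
    using homeomorphic_imp_continuous_map[OF profinite_groupD(4)[OF assms(1)]]
      continuous_map_into_fulltopology by (auto simp: quot_limit_topology_def)
  then have "continuous_map T (quot_top G N) ((\<lambda>x. x N) \<circ> ?\<phi>)"
    using continuous_map_compose continuous_map_product_projection[OF assms(2)] by blast
  moreover have "(\<lambda>x. x N) \<circ> ?\<phi> = (\<lambda>g. N #>\<^bsub>G\<^esub> g)" using assms(2) by auto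
  ultimately show ?thesis by simp
qed

lemma profinite_open_basic_nbhd:
  fixes G (structure)
  assumes pg: "profinite_group G T" and U: "openin T U" "g \<in> U"
  shows "\<exists>V. finite {N \<in> fin_quots G T. V N \<noteq> carrier (G Mod N)}
           \<and> (\<lambda>N\<in>fin_quots G T. N #> g) \<in> Pi\<^sub>E (fin_quots G T) V
           \<and> (\<forall>x\<in>carrier G. (\<lambda>N\<in>fin_quots G T. N #> x) \<in> Pi\<^sub>E (fin_quots G T) V \<longrightarrow> x \<in> U)"
proof -
  let ?I = "fin_quots G T"
  let ?\<phi> = "\<lambda>g. \<lambda>N\<in>?I. N #> g"
  note tp = profinite_groupD(2)[OF pg] and hm = profinite_groupD(4)[OF pg]
  have "openin (quot_limit_topology G T) (?\<phi> ` U)"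
    using homeomorphic_map_openness_eq[OF hm] U(1) by blast
  then obtain W where W: "openin (product_topology (quot_top G) ?I) W" "?\<phi> ` U = W \<inter> quot_limit G T"
    unfolding quot_limit_topology_def openin_subtopology by blast
  have "?\<phi> g \<in> W" using W(2) U(2) by blast
  then obtain V where V: "finite {N \<in> ?I. V N \<noteq> carrier (G Mod N)}"
    "?\<phi> g \<in> Pi\<^sub>E ?I V" "Pi\<^sub>E ?I V \<subseteq> W"
    using W(1) unfolding openin_product_topology_alt by force
  have "x \<in> U" if x: "x \<in> carrier G" "?\<phi> x \<in> Pi\<^sub>E ?I V" for x
  proof -
    have "?\<phi> x \<in> quot_limit G T"
      using homeomorphic_imp_continuous_map[OF hm] x(1) tp
      by (auto simp: continuous_map_def quot_limit_topology_def)
    then have "?\<phi> x \<in> ?\<phi> ` U" using x(2) V(3) W(2) by blast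
    then obtain u where "u \<in> U" "?\<phi> x = ?\<phi> u" by blast
    moreover have "U \<subseteq> topspace T" using U(1) openin_subset by blast
    ultimately show "x \<in> U"
      using inj_onD[OF homeomorphic_imp_injective_map[OF hm], of x u] x(1) tp by auto
  qed
  then show ?thesis using V(1,2) by blast
qed

lemma profinite_finite_rcos_nbhd:
  fixes G (structure)
  assumes pg: "profinite_group G T" and U: "openin T U" "g \<in> U"
  shows "\<exists>F. finite F \<and> F \<subseteq> fin_quots G T \<and> (\<forall>x\<in>carrier G. (\<forall>N\<in>F. N #> x = N #> g) \<longrightarrow> x \<in> U)"
proof -
  let ?I = "fin_quots G T"
  obtain V where V: "finite {N \<in> ?I. V N \<noteq> carrier (G Mod N)}"
    "(\<lambda>N\<in>?I. N #> g) \<in> Pi\<^sub>E ?I V" "\<forall>x\<in>carrier G. (\<lambda>N\<in>?I. N #> x) \<in> Pi\<^sub>E ?I V \<longrightarrow> x \<in> U"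
    using profinite_open_basic_nbhd[OF pg U] by blast
  let ?F = "{N \<in> ?I. V N \<noteq> carrier (G Mod N)}"
  have "(\<lambda>N\<in>?I. N #> x) \<in> Pi\<^sub>E ?I V" if x: "x \<in> carrier G" "\<forall>N\<in>?F. N #> x = N #> g" for x
  proof (rule PiE_I)
    fix N assume N: "N \<in> ?I"
    show "(\<lambda>N\<in>?I. N #> x) N \<in> V N"
    proof (cases "N \<in> ?F")
      case True
      then have "N #> x = N #> g" using x(2) by blast
      moreover have "(\<lambda>N\<in>?I. N #> g) N \<in> V N" using V(2) N by (rule PiE_mem)
      ultimately show ?thesis using N by simp
    next
      case False
      then show ?thesis using N x(1) by (simp add: carrier_Mod_eq_image_rcos[of G])
    qed
  qed simp
  then have "\<forall>x\<in>carrier G. (\<forall>N\<in>?F. N #> x = N #> g) \<longrightarrow> x \<in> U" using V(3) by blast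
  moreover have "?F \<subseteq> ?I" by blast
  ultimately show ?thesis using V(1) by (intro exI[of _ ?F]) blast
qed

lemma profinite_rcos_nbhd:
  fixes G (structure)
  assumes pg: "profinite_group G T" and U: "openin T U" "g \<in> U"
  shows "\<exists>N\<in>fin_quots G T. \<forall>x\<in>carrier G. N #> x = N #> g \<longrightarrow> x \<in> U"
proof -
  note gr = profinite_groupD(1)[OF pg]
  obtain F where F: "finite F" "F \<subseteq> fin_quots G T"
    and sub_U: "\<forall>x\<in>carrier G. (\<forall>N\<in>F. N #> x = N #> g) \<longrightarrow> x \<in> U"
    using profinite_finite_rcos_nbhd[OF pg U] by blast
  define K where "K = carrier G \<inter> \<Inter>F"
  have K: "K \<in> fin_quots G T"
    unfolding K_def using fin_quots_Inter[OF profinite_groupD(3)[OF pg] F] .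
  have g: "g \<in> carrier G"
    using U openin_subset profinite_groupD(2)[OF pg] by blast
  have coarsen: "N #> x = N #> g" if x: "x \<in> carrier G" "K #> x = K #> g" and N: "N \<in> F" for x N
  proof -
    have "K \<subseteq> N" using N by (auto simp: K_def)
    then show ?thesis
      by (rule rcos_eq_coarsen[OF gr fin_quots_subgroup[OF K] fin_quots_subgroup[OF subsetD[OF F(2) N]]
            _ x(1) g x(2)])
  qed
  show ?thesis
  proof (intro bexI[OF _ K] ballI impI)
    fix x assume "x \<in> carrier G" "K #> x = K #> g"
    then show "x \<in> U" using sub_U coarsen by blast
  qed
qed

lemma closedin_quot_limit:
  "closedin (product_topology (quot_top G) (fin_quots G T)) (quot_limit G T)"
proof -
  let ?I = "fin_quots G T"
  let ?P = "product_topology (quot_top G) ?I"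
  let ?C = "\<lambda>M N. {x \<in> topspace ?P. x M \<subseteq> x N}"
  let ?\<C> = "insert (topspace ?P) {?C M N | M N. M \<in> ?I \<and> N \<in> ?I \<and> M \<subseteq> N}"
  have closed_C: "closedin ?P (?C M N)" if "M \<in> ?I" "N \<in> ?I" for M N
  proof -
    let ?S = "{(A, B) \<in> carrier (G Mod M) \<times> carrier (G Mod N). A \<subseteq> B}"
    have "continuous_map ?P (prod_topology (quot_top G M) (quot_top G N)) (\<lambda>x. (x M, x N))"
      using that by (intro continuous_map_pairedI continuous_map_product_projection)
    then have "closedin ?P {x \<in> topspace ?P. (x M, x N) \<in> ?S}"
      by (rule closedin_continuous_map_preimage) (auto simp: prod_topology_discrete_topology[symmetric])
    moreover have "{x \<in> topspace ?P. (x M, x N) \<in> ?S} = ?C M N"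
      using that by (auto simp: PiE_iff)
    ultimately show ?thesis by simp
  qed
  have "closedin ?P (\<Inter>?\<C>)"
    using closed_C closedin_topspace by (intro closedin_Inter) blast+
  moreover have "quot_limit G T = \<Inter>?\<C>"
    by (auto simp: quot_limit_def)
  ultimately show ?thesis by simp
qed

lemma compact_space_profinite:
  assumes "profinite_group G T"
  shows "compact_space T"
proof -
  have "compact_space (product_topology (quot_top G) (fin_quots G T))"
    by (auto simp: compact_space_product_topology compact_space_discrete_topology fin_quots_def)
  then have "compact_space (quot_limit_topology G T)"
    unfolding quot_limit_topology_def
    using closedin_quot_limit closedin_compact_space compact_space_subtopology by blast
  then show ?thesis
    using homeomorphic_compact_space
      homeomorphic_map_imp_homeomorphic_space[OF profinite_groupD(4)[OF assms]] by blast
qed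

section \<open>Continuous maps to discrete spaces factor through finite quotients\<close>

definition rcos_box :: "('g, 'a) monoid_scheme \<Rightarrow> 'g set \<Rightarrow> 'g \<times> 'g \<Rightarrow> ('g \<times> 'g) set" where
  "rcos_box G N p = {q \<in> carrier G \<times> carrier G.
     N #>\<^bsub>G\<^esub> fst q = N #>\<^bsub>G\<^esub> fst p \<and> N #>\<^bsub>G\<^esub> snd q = N #>\<^bsub>G\<^esub> snd p}"

lemma rcos_box_self: "p \<in> carrier G \<times> carrier G \<Longrightarrow> p \<in> rcos_box G N p"
  by (simp add: rcos_box_def)

lemma rcos_box_eq: "q \<in> rcos_box G N p \<Longrightarrow> rcos_box G N q = rcos_box G N p"
  by (auto simp: rcos_box_def)

lemma rcos_box_mono:
  fixes G (structure)
  assumes "group G" "subgroup M G" "subgroup N G" "M \<subseteq> N" and p: "p \<in> carrier G \<times> carrier G"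
  shows "rcos_box G M p \<subseteq> rcos_box G N p"
proof
  fix q assume "q \<in> rcos_box G M p"
  then have q: "fst q \<in> carrier G" "snd q \<in> carrier G" "q \<in> carrier G \<times> carrier G"
    and eq: "M #> fst q = M #> fst p" "M #> snd q = M #> snd p"
    by (auto simp: rcos_box_def)
  have "N #> fst q = N #> fst p" "N #> snd q = N #> snd p"
    using rcos_eq_coarsen[OF assms(1-4) q(1) _ eq(1)] rcos_eq_coarsen[OF assms(1-4) q(2) _ eq(2)] p
    by (simp_all add: mem_Times_iff)
  then show "q \<in> rcos_box G N p" using q(3) by (simp add: rcos_box_def)
qed

lemma openin_rcos_box:
  assumes pg: "profinite_group G T" and N: "N \<in> fin_quots G T" and p: "p \<in> carrier G \<times> carrier G"
  shows "openin (prod_topology T T) (rcos_box G N p)"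
proof -
  let ?\<pi> = "\<lambda>q. (N #>\<^bsub>G\<^esub> fst q, N #>\<^bsub>G\<^esub> snd q)"
  note cont = continuous_map_rcos[OF pg N]
  have "continuous_map (prod_topology T T) (prod_topology (quot_top G N) (quot_top G N)) ?\<pi>"
    using continuous_map_pairedI[OF continuous_map_compose[OF continuous_map_fst cont]
        continuous_map_compose[OF continuous_map_snd cont]] by (simp add: o_def)
  then have "openin (prod_topology T T) {q \<in> topspace (prod_topology T T). ?\<pi> q \<in> {?\<pi> p}}"
    using p by (intro openin_continuous_map_preimage)
      (auto simp: prod_topology_discrete_topology[symmetric] carrier_Mod_eq_image_rcos[of G])
  then show ?thesis using profinite_groupD(2)[OF pg] by (simp add: rcos_box_def Collect_conj_eq)
qed

lemma profinite_continuous_const_on_rcos_box: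
  fixes G (structure)
  assumes pg: "profinite_group G T"
    and c: "continuous_map (prod_topology T T) (discrete_topology S) c"
    and p: "p \<in> carrier G \<times> carrier G"
  shows "\<exists>N\<in>fin_quots G T. \<forall>q\<in>rcos_box G N p. c q = c p"
proof -
  note gr = profinite_groupD(1)[OF pg] and tp = profinite_groupD(2)[OF pg]
  let ?U = "{q \<in> topspace (prod_topology T T). c q \<in> {c p}}"
  have "openin (prod_topology T T) ?U"
    using p tp continuous_map_image_subset_topspace[OF c]
    by (intro openin_continuous_map_preimage[OF c]) auto
  moreover have "(fst p, snd p) \<in> ?U" using p tp by auto
  ultimately have "\<exists>U1 U2. openin T U1 \<and> openin T U2 \<and> fst p \<in> U1 \<and> snd p \<in> U2 \<and> U1 \<times> U2 \<subseteq> ?U"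
    unfolding openin_prod_topology_alt by blast
  then obtain U1 U2 where U: "openin T U1" "openin T U2" "fst p \<in> U1" "snd p \<in> U2" "U1 \<times> U2 \<subseteq> ?U"
    by blast
  obtain N1 where N1: "N1 \<in> fin_quots G T" "\<forall>x\<in>carrier G. N1 #> x = N1 #> fst p \<longrightarrow> x \<in> U1"
    using profinite_rcos_nbhd[OF pg U(1,3)] by blast
  obtain N2 where N2: "N2 \<in> fin_quots G T" "\<forall>x\<in>carrier G. N2 #> x = N2 #> snd p \<longrightarrow> x \<in> U2"
    using profinite_rcos_nbhd[OF pg U(2,4)] by blast
  let ?N = "N1 \<inter> N2"
  have N: "?N \<in> fin_quots G T" using fin_quots_Int[OF gr N1(1) N2(1)] .
  have "rcos_box G ?N p \<subseteq> rcos_box G N1 p" "rcos_box G ?N p \<subseteq> rcos_box G N2 p"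
    using rcos_box_mono[OF gr fin_quots_subgroup[OF N] fin_quots_subgroup[OF N1(1)] Int_lower1 p]
      rcos_box_mono[OF gr fin_quots_subgroup[OF N] fin_quots_subgroup[OF N2(1)] Int_lower2 p] .
  then have box: "rcos_box G ?N p \<subseteq> U1 \<times> U2"
    using N1(2) N2(2) by (auto simp: rcos_box_def)
  show ?thesis
  proof (intro bexI[OF _ N] ballI)
    fix q assume "q \<in> rcos_box G ?N p"
    then have "q \<in> ?U" using box U(5) by blast
    then show "c q = c p" by simp
  qed
qed

lemma compact_space_pointwise_finite_subcover:
  assumes "compact_space T"
    and "\<And>p. p \<in> topspace T \<Longrightarrow> openin T (B p)" "\<And>p. p \<in> topspace T \<Longrightarrow> p \<in> B p"
  shows "\<exists>P. finite P \<and> P \<subseteq> topspace T \<and> topspace T \<subseteq> (\<Union>p\<in>P. B p)"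
proof -
  have "(\<forall>U\<in>B ` topspace T. openin T U) \<and> topspace T \<subseteq> \<Union>(B ` topspace T)"
    using assms(2,3) by blast
  from compact_space_alt[THEN iffD1, OF assms(1), rule_format, OF this]
  obtain \<F> where "finite \<F>" "\<F> \<subseteq> B ` topspace T" "topspace T \<subseteq> \<Union>\<F>"
    by blast
  then show ?thesis by (metis finite_subset_image)
qed

lemma profinite_continuous_finite_rcos_box_cover:
  assumes pg: "profinite_group G T"
    and c: "continuous_map (prod_topology T T) (discrete_topology S) c"
  shows "\<exists>P Nf. finite P \<and> P \<subseteq> carrier G \<times> carrier G
           \<and> carrier G \<times> carrier G \<subseteq> (\<Union>p\<in>P. rcos_box G (Nf p) p)
           \<and> (\<forall>p\<in>P. Nf p \<in> fin_quots G T \<and> (\<forall>q\<in>rcos_box G (Nf p) p. c q = c p))"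
proof -
  have tpp: "topspace (prod_topology T T) = carrier G \<times> carrier G"
    using profinite_groupD(2)[OF pg] by simp
  have "\<forall>p\<in>carrier G \<times> carrier G. \<exists>N. N \<in> fin_quots G T \<and> (\<forall>q\<in>rcos_box G N p. c q = c p)"
    using profinite_continuous_const_on_rcos_box[OF pg c] by blast
  from bchoice[OF this] obtain Nf
    where Nf: "\<forall>p\<in>carrier G \<times> carrier G. Nf p \<in> fin_quots G T \<and> (\<forall>q\<in>rcos_box G (Nf p) p. c q = c p)"
    by blast
  have cs: "compact_space (prod_topology T T)"
    using compact_space_profinite[OF pg] compact_space_prod_topology by blast
  have opn: "openin (prod_topology T T) (rcos_box G (Nf p) p)" if "p \<in> topspace (prod_topology T T)" for p
    using openin_rcos_box[OF pg] Nf that unfolding tpp by blast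
  have mem: "p \<in> rcos_box G (Nf p) p" if "p \<in> topspace (prod_topology T T)" for p
    using rcos_box_self that unfolding tpp by blast
  from compact_space_pointwise_finite_subcover[OF cs opn mem]
  obtain P where "finite P" "P \<subseteq> topspace (prod_topology T T)"
      "topspace (prod_topology T T) \<subseteq> (\<Union>p\<in>P. rcos_box G (Nf p) p)"
    by blast
  then show ?thesis using Nf unfolding tpp by (intro exI[of _ P] exI[of _ Nf]) blast
qed

lemma profinite_continuous_factors_rcos2:
  fixes G (structure)
  assumes pg: "profinite_group G T"
    and c: "continuous_map (prod_topology T T) (discrete_topology S) c"
  shows "\<exists>M\<in>fin_quots G T. \<forall>g\<in>carrier G. \<forall>g'\<in>carrier G. \<forall>h\<in>carrier G. \<forall>h'\<in>carrier G.
           M #> g = M #> g' \<longrightarrow> M #> h = M #> h' \<longrightarrow> c (g, h) = c (g', h')"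
proof -
  note gr = profinite_groupD(1)[OF pg]
  obtain P Nf where P: "finite P" "P \<subseteq> carrier G \<times> carrier G"
      "carrier G \<times> carrier G \<subseteq> (\<Union>p\<in>P. rcos_box G (Nf p) p)"
    and Nf: "\<forall>p\<in>P. Nf p \<in> fin_quots G T \<and> (\<forall>q\<in>rcos_box G (Nf p) p. c q = c p)"
    using profinite_continuous_finite_rcos_box_cover[OF pg c] by blast
  define M where "M = carrier G \<inter> \<Inter>(Nf ` P)"
  have "Nf ` P \<subseteq> fin_quots G T" using Nf by blast
  then have M: "M \<in> fin_quots G T"
    unfolding M_def using fin_quots_Inter[OF profinite_groupD(3)[OF pg] finite_imageI[OF P(1)]] by blast
  show ?thesis
  proof (intro bexI[OF _ M] ballI impI)
    fix g g' h h'
    assume gh: "g \<in> carrier G" "g' \<in> carrier G" "h \<in> carrier G" "h' \<in> carrier G"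
      and eq: "M #> g = M #> g'" "M #> h = M #> h'"
    obtain p where p: "p \<in> P" "(g, h) \<in> rcos_box G (Nf p) p" using P(3) gh(1,3) by blast
    have "M \<subseteq> Nf p" using p(1) by (auto simp: M_def)
    then have "rcos_box G M (g, h) \<subseteq> rcos_box G (Nf p) (g, h)"
      using rcos_box_mono[OF gr fin_quots_subgroup[OF M] fin_quots_subgroup] Nf p(1) gh(1,3) by blast
    also have "\<dots> = rcos_box G (Nf p) p" using rcos_box_eq[OF p(2)] .
    finally have "(g', h') \<in> rcos_box G (Nf p) p"
      using gh(2,4) eq by (auto simp: rcos_box_def)
    then show "c (g, h) = c (g', h')" using Nf p by auto
  qed
qed

lemma profinite_continuous_factors_rcos:
  fixes G (structure)
  assumes pg: "profinite_group G T" and f: "continuous_map T (discrete_topology S) f"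
  shows "\<exists>M\<in>fin_quots G T. \<forall>g\<in>carrier G. \<forall>g'\<in>carrier G. M #> g = M #> g' \<longrightarrow> f g = f g'"
proof -
  have "continuous_map (prod_topology T T) (discrete_topology S) (f \<circ> fst)"
    by (rule continuous_map_compose[OF continuous_map_fst f])
  from profinite_continuous_factors_rcos2[OF pg this] obtain M where "M \<in> fin_quots G T"
    and M: "\<forall>g\<in>carrier G. \<forall>g'\<in>carrier G. \<forall>h\<in>carrier G. \<forall>h'\<in>carrier G.
      M #> g = M #> g' \<longrightarrow> M #> h = M #> h' \<longrightarrow> (f \<circ> fst) (g, h) = (f \<circ> fst) (g', h')"
    by (elim bexE)
  moreover have "f g = f g'" if "g \<in> carrier G" "g' \<in> carrier G" "M #> g = M #> g'" for g g'
    using M[rule_format, of g g' g g'] that by simp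
  ultimately show ?thesis by blast
qed

section \<open>Inflation and descent of symmetric cochains\<close>

lemma Z2tsI:
  assumes "c \<in> carrier K \<times> carrier K \<rightarrow>\<^sub>E carrier H"
    and "continuous_map (prod_topology TK TK) (discrete_topology (carrier H)) c"
    and "\<And>g h k. g \<in> carrier K \<Longrightarrow> h \<in> carrier K \<Longrightarrow> k \<in> carrier K \<Longrightarrow>
          c (h, k) \<otimes>\<^bsub>H\<^esub> c (g, h \<otimes>\<^bsub>K\<^esub> k) = c (g \<otimes>\<^bsub>K\<^esub> h, k) \<otimes>\<^bsub>H\<^esub> c (g, h)"
    and "\<And>g h. g \<in> carrier K \<Longrightarrow> h \<in> carrier K \<Longrightarrow> c (g, h) = c (h, g)"
  shows "c \<in> Z2ts K TK H"
  unfolding Z2ts_def using assms by blast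

lemma B2tsI:
  assumes "c \<in> Z2ts K TK H" "f \<in> carrier K \<rightarrow>\<^sub>E carrier H"
    and "continuous_map TK (discrete_topology (carrier H)) f"
    and "\<And>g h. g \<in> carrier K \<Longrightarrow> h \<in> carrier K \<Longrightarrow>
          c (g, h) = f g \<otimes>\<^bsub>H\<^esub> f h \<otimes>\<^bsub>H\<^esub> inv\<^bsub>H\<^esub> (f (g \<otimes>\<^bsub>K\<^esub> h))"
  shows "c \<in> B2ts K TK H"
  unfolding B2ts_def using assms by blast

lemma Z2ts_inflate:
  assumes "monoid K'" and p: "p \<in> hom K' K" and cont: "continuous_map TK' TK p"
    and top: "topspace TK' = carrier K'" and c: "c \<in> Z2ts K TK H"
  shows "inflate p K' c \<in> Z2ts K' TK' H"
proof -
  have pc: "\<And>x. x \<in> carrier K' \<Longrightarrow> p x \<in> carrier K" using p by (auto simp: hom_def)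
  have pm: "\<And>x y. x \<in> carrier K' \<Longrightarrow> y \<in> carrier K' \<Longrightarrow> p (x \<otimes>\<^bsub>K'\<^esub> y) = p x \<otimes>\<^bsub>K\<^esub> p y"
    using p by (auto simp: hom_def)
  have cP: "c \<in> carrier K \<times> carrier K \<rightarrow>\<^sub>E carrier H"
    and cC: "continuous_map (prod_topology TK TK) (discrete_topology (carrier H)) c"
    using c by (auto simp: Z2ts_def)
  show ?thesis
  proof (rule Z2tsI)
    show "inflate p K' c \<in> carrier K' \<times> carrier K' \<rightarrow>\<^sub>E carrier H"
      using cP pc by (auto simp: inflate_def PiE_iff)
    have "continuous_map (prod_topology TK' TK') (discrete_topology (carrier H))
        (c \<circ> (\<lambda>x. (p (fst x), p (snd x))))"
      using continuous_map_compose[OF continuous_map_pairedI[OF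
            continuous_map_compose[OF continuous_map_fst cont]
            continuous_map_compose[OF continuous_map_snd cont]] cC]
      by (simp add: o_def)
    then show "continuous_map (prod_topology TK' TK') (discrete_topology (carrier H)) (inflate p K' c)"
      by (rule continuous_map_eq) (auto simp: inflate_def top)
  next
    fix g h k assume "g \<in> carrier K'" "h \<in> carrier K'" "k \<in> carrier K'"
    moreover from this have "g \<otimes>\<^bsub>K'\<^esub> h \<in> carrier K'" "h \<otimes>\<^bsub>K'\<^esub> k \<in> carrier K'"
      using monoid.m_closed[OF \<open>monoid K'\<close>] by auto
    ultimately show "inflate p K' c (h, k) \<otimes>\<^bsub>H\<^esub> inflate p K' c (g, h \<otimes>\<^bsub>K'\<^esub> k)
        = inflate p K' c (g \<otimes>\<^bsub>K'\<^esub> h, k) \<otimes>\<^bsub>H\<^esub> inflate p K' c (g, h)"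
      using c pc pm by (simp add: inflate_def Z2ts_def)
  next
    fix g h assume "g \<in> carrier K'" "h \<in> carrier K'"
    then show "inflate p K' c (g, h) = inflate p K' c (h, g)"
      using c pc by (simp add: inflate_def Z2ts_def)
  qed
qed

lemma B2ts_inflate:
  assumes "monoid K'" and p: "p \<in> hom K' K" and cont: "continuous_map TK' TK p"
    and top: "topspace TK' = carrier K'" and c: "c \<in> B2ts K TK H"
  shows "inflate p K' c \<in> B2ts K' TK' H"
proof -
  obtain f where f: "f \<in> carrier K \<rightarrow>\<^sub>E carrier H" "continuous_map TK (discrete_topology (carrier H)) f"
    and cob: "\<forall>g\<in>carrier K. \<forall>h\<in>carrier K. c (g, h) = f g \<otimes>\<^bsub>H\<^esub> f h \<otimes>\<^bsub>H\<^esub> inv\<^bsub>H\<^esub> (f (g \<otimes>\<^bsub>K\<^esub> h))"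
    using c by (auto simp: B2ts_def)
  have pc: "\<And>x. x \<in> carrier K' \<Longrightarrow> p x \<in> carrier K" using p by (auto simp: hom_def)
  show ?thesis
  proof (rule B2tsI[of _ _ _ _ "\<lambda>x\<in>carrier K'. f (p x)"])
    have "c \<in> Z2ts K TK H" using c by (simp add: B2ts_def)
    then show "inflate p K' c \<in> Z2ts K' TK' H" by (rule Z2ts_inflate[OF assms(1-4)])
    show "(\<lambda>x\<in>carrier K'. f (p x)) \<in> carrier K' \<rightarrow>\<^sub>E carrier H"
      using f(1) pc by auto
    have "continuous_map TK' (discrete_topology (carrier H)) (f \<circ> p)"
      using continuous_map_compose[OF cont f(2)] .
    then show "continuous_map TK' (discrete_topology (carrier H)) (\<lambda>x\<in>carrier K'. f (p x))"
      by (rule continuous_map_eq) (simp add: top)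
    fix g h assume "g \<in> carrier K'" "h \<in> carrier K'"
    then show "inflate p K' c (g, h) = (\<lambda>x\<in>carrier K'. f (p x)) g \<otimes>\<^bsub>H\<^esub> (\<lambda>x\<in>carrier K'. f (p x)) h
        \<otimes>\<^bsub>H\<^esub> inv\<^bsub>H\<^esub> ((\<lambda>x\<in>carrier K'. f (p x)) (g \<otimes>\<^bsub>K'\<^esub> h))"
      using cob pc p monoid.m_closed[OF assms(1)] by (simp add: inflate_def hom_def)
  qed
qed

lemma factor_through_surj:
  assumes surj: "p ` A = B" and fibres: "\<And>x y. x \<in> A \<Longrightarrow> y \<in> A \<Longrightarrow> p x = p y \<Longrightarrow> f x = f y"
    and f: "f \<in> A \<rightarrow> S"
  shows "\<exists>f'\<in>B \<rightarrow>\<^sub>E S. \<forall>x\<in>A. f' (p x) = f x"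
proof
  let ?f' = "\<lambda>b\<in>B. f (inv_into A p b)"
  have "f (inv_into A p b) \<in> S" if "b \<in> B" for b
    using that surj inv_into_into[of b p A] f by auto
  then show "?f' \<in> B \<rightarrow>\<^sub>E S" by (simp add: restrict_PiE_iff)
  show "\<forall>x\<in>A. ?f' (p x) = f x"
  proof
    fix x assume x: "x \<in> A"
    then have "p x \<in> p ` A" by (rule imageI)
    then have "inv_into A p (p x) \<in> A" "p (inv_into A p (p x)) = p x" "p x \<in> B"
      using surj by (simp_all add: inv_into_into f_inv_into_f)
    then show "?f' (p x) = f x" using fibres[OF _ x] by simp
  qed
qed

lemma Z2ts_descend:
  assumes "monoid K'" and p: "p \<in> hom K' K" and surj: "p ` carrier K' = carrier K"
    and d: "d \<in> carrier K \<times> carrier K \<rightarrow>\<^sub>E carrier H"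
    and infl: "inflate p K' d \<in> Z2ts K' TK' H"
  shows "d \<in> Z2ts K (discrete_topology (carrier K)) H"
proof (rule Z2tsI[OF d])
  show "continuous_map (prod_topology (discrete_topology (carrier K)) (discrete_topology (carrier K)))
      (discrete_topology (carrier H)) d"
    using d by (auto simp: prod_topology_discrete_topology[symmetric] PiE_iff)
  have val: "d (p x, p y) = inflate p K' d (x, y)" if "x \<in> carrier K'" "y \<in> carrier K'" for x y
    using that by (simp add: inflate_def)
  have pm: "\<And>x y. x \<in> carrier K' \<Longrightarrow> y \<in> carrier K' \<Longrightarrow> p (x \<otimes>\<^bsub>K'\<^esub> y) = p x \<otimes>\<^bsub>K\<^esub> p y"
    using p by (auto simp: hom_def)
  fix A B C assume "A \<in> carrier K" "B \<in> carrier K" "C \<in> carrier K"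
  then obtain x y z where xyz: "x \<in> carrier K'" "y \<in> carrier K'" "z \<in> carrier K'" "A = p x" "B = p y" "C = p z"
    using surj by blast
  show "d (B, C) \<otimes>\<^bsub>H\<^esub> d (A, B \<otimes>\<^bsub>K\<^esub> C) = d (A \<otimes>\<^bsub>K\<^esub> B, C) \<otimes>\<^bsub>H\<^esub> d (A, B)"
  proof -
    have "y \<otimes>\<^bsub>K'\<^esub> z \<in> carrier K'" "x \<otimes>\<^bsub>K'\<^esub> y \<in> carrier K'"
      using xyz monoid.m_closed[OF \<open>monoid K'\<close>] by auto
    moreover have "inflate p K' d (y, z) \<otimes>\<^bsub>H\<^esub> inflate p K' d (x, y \<otimes>\<^bsub>K'\<^esub> z)
        = inflate p K' d (x \<otimes>\<^bsub>K'\<^esub> y, z) \<otimes>\<^bsub>H\<^esub> inflate p K' d (x, y)"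
      using infl xyz(1-3) unfolding Z2ts_def by blast
    ultimately show ?thesis using xyz by (simp add: val pm[symmetric])
  qed
next
  fix A B assume "A \<in> carrier K" "B \<in> carrier K"
  then obtain x y where xy: "x \<in> carrier K'" "y \<in> carrier K'" "A = p x" "B = p y"
    using surj by blast
  then show "d (A, B) = d (B, A)"
    using infl by (simp add: inflate_def Z2ts_def)
qed

lemma B2ts_descend:
  assumes p: "p \<in> hom K' K" and surj: "p ` carrier K' = carrier K"
    and e: "e \<in> Z2ts K (discrete_topology (carrier K)) H" and f: "f \<in> carrier K \<rightarrow>\<^sub>E carrier H"
    and cob: "\<And>x y. x \<in> carrier K' \<Longrightarrow> y \<in> carrier K' \<Longrightarrow>
      e (p x, p y) = f (p x) \<otimes>\<^bsub>H\<^esub> f (p y) \<otimes>\<^bsub>H\<^esub> inv\<^bsub>H\<^esub> (f (p (x \<otimes>\<^bsub>K'\<^esub> y)))"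
  shows "e \<in> B2ts K (discrete_topology (carrier K)) H"
proof (rule B2tsI[OF e f])
  show "continuous_map (discrete_topology (carrier K)) (discrete_topology (carrier H)) f"
    using f by (auto simp: PiE_iff)
  fix A B assume "A \<in> carrier K" "B \<in> carrier K"
  then have "A \<in> p ` carrier K'" "B \<in> p ` carrier K'" using surj by simp_all
  then obtain x y where "x \<in> carrier K'" "y \<in> carrier K'" "A = p x" "B = p y" by blast
  then show "e (A, B) = f A \<otimes>\<^bsub>H\<^esub> f B \<otimes>\<^bsub>H\<^esub> inv\<^bsub>H\<^esub> (f (A \<otimes>\<^bsub>K\<^esub> B))"
    using cob hom_mult[OF p] by simp
qed

lemma cohomologous_refl:
  assumes "monoid K" "topspace TK = carrier K" "group H" and c: "c \<in> Z2ts K TK H"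
  shows "cohomologous K TK H c c"
proof -
  interpret H: group H by fact
  let ?one = "\<lambda>x\<in>carrier K \<times> carrier K. \<one>\<^bsub>H\<^esub>"
  have "(\<lambda>x\<in>carrier K \<times> carrier K. c x \<otimes>\<^bsub>H\<^esub> inv\<^bsub>H\<^esub> (c x)) = ?one"
    using c by (intro restrict_ext) (auto simp: Z2ts_def PiE_iff)
  moreover have "?one \<in> Z2ts K TK H"
  proof (rule Z2tsI)
    show "continuous_map (prod_topology TK TK) (discrete_topology (carrier H)) ?one"
      by (rule continuous_map_eq[of _ _ "\<lambda>x. \<one>\<^bsub>H\<^esub>"]) (simp_all add: assms(2))
  qed (auto simp: monoid.m_closed[OF assms(1)])
  moreover have "continuous_map TK (discrete_topology (carrier H)) (\<lambda>g\<in>carrier K. \<one>\<^bsub>H\<^esub>)"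
    by (rule continuous_map_eq[of _ _ "\<lambda>x. \<one>\<^bsub>H\<^esub>"]) (simp_all add: assms(2))
  ultimately show ?thesis
    using c by (auto simp: cohomologous_def monoid.m_closed[OF assms(1)]
        intro!: B2tsI[of _ _ _ _ "\<lambda>g\<in>carrier K. \<one>\<^bsub>H\<^esub>"])
qed

section \<open>Comparison with the finite quotients\<close>

lemma Z2ts_inflate_set_mult:
  fixes G (structure)
  assumes "group G" "M \<in> fin_quots G T" "N \<in> fin_quots G T" "M \<subseteq> N"
    and d: "d \<in> Z2ts (G Mod N) (quot_top G N) H"
  shows "inflate (\<lambda>C. N <#> C) (G Mod M) d \<in> Z2ts (G Mod M) (quot_top G M) H"
proof -
  have normal: "M \<lhd> G" "N \<lhd> G" using assms(2,3) by (simp_all add: fin_quots_def)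
  have hom: "(\<lambda>C. N <#> C) \<in> hom (G Mod M) (G Mod N)"
    using set_mult_rcos_hom_Mod[OF assms(1) normal assms(4)] .
  then have "continuous_map (quot_top G M) (quot_top G N) (\<lambda>C. N <#> C)"
    by (simp add: hom_def)
  moreover have "monoid (G Mod M)"
    using normal(1) by (rule group.is_monoid[OF normal.factorgroup_is_group])
  ultimately show ?thesis
    using Z2ts_inflate[OF _ hom _ _ d] by simp
qed

lemma Z2ts_cohomologous_inflation:
  fixes G (structure)
  assumes pg: "profinite_group G T" and H: "group H" and c: "c \<in> Z2ts G T H"
  shows "\<exists>M\<in>fin_quots G T. \<exists>d\<in>Z2ts (G Mod M) (quot_top G M) H.
           cohomologous G T H (inflate (\<lambda>g. M #> g) G d) c"
proof -
  note gr = profinite_groupD(1)[OF pg] and tp = profinite_groupD(2)[OF pg]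
  have cP: "c \<in> carrier G \<times> carrier G \<rightarrow>\<^sub>E carrier H"
    and cC: "continuous_map (prod_topology T T) (discrete_topology (carrier H)) c"
    using c by (simp_all add: Z2ts_def)
  obtain M where M: "M \<in> fin_quots G T" and factors: "\<forall>g\<in>carrier G. \<forall>g'\<in>carrier G. \<forall>h\<in>carrier G. \<forall>h'\<in>carrier G.
      M #> g = M #> g' \<longrightarrow> M #> h = M #> h' \<longrightarrow> c (g, h) = c (g', h')"
    using profinite_continuous_factors_rcos2[OF pg cC] by blast
  let ?p = "\<lambda>x. (M #> fst x, M #> snd x)"
  have p_image: "?p ` (carrier G \<times> carrier G) = carrier (G Mod M) \<times> carrier (G Mod M)"
    unfolding carrier_Mod_eq_image_rcos[of G M] by force
  have fibres: "c x = c y" if "x \<in> carrier G \<times> carrier G" "y \<in> carrier G \<times> carrier G" "?p x = ?p y" for x y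
  proof -
    have "c (fst x, snd x) = c (fst y, snd y)"
      using that by (intro factors[rule_format]) auto
    then show ?thesis by simp
  qed
  have "c \<in> carrier G \<times> carrier G \<rightarrow> carrier H" using cP by (auto simp: PiE_iff)
  from factor_through_surj[OF p_image fibres this]
  obtain d where dP: "d \<in> carrier (G Mod M) \<times> carrier (G Mod M) \<rightarrow>\<^sub>E carrier H"
    and d: "\<forall>x\<in>carrier G \<times> carrier G. d (?p x) = c x"
    by blast
  have infl: "inflate (\<lambda>g. M #> g) G d = c"
  proof
    fix x show "inflate (\<lambda>g. M #> g) G d x = c x"
    proof (cases "x \<in> carrier G \<times> carrier G")
      case True
      then show ?thesis using bspec[OF d True] by (simp add: inflate_def)
    next
      case False
      then show ?thesis using PiE_arb[OF cP False] by (simp add: inflate_def)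
    qed
  qed
  have "(\<lambda>g. M #> g) ` carrier G = carrier (G Mod M)"
    by (simp add: carrier_Mod_eq_image_rcos)
  then have "d \<in> Z2ts (G Mod M) (quot_top G M) H"
    using Z2ts_descend[OF group.is_monoid[OF gr] rcos_hom_Mod[OF M] _ dP] c infl by simp
  moreover have "cohomologous G T H c c"
    by (rule cohomologous_refl[OF group.is_monoid[OF gr] tp H c])
  ultimately show ?thesis using infl by (intro bexI[OF _ M]) auto
qed

lemma inflation_B2ts_descends:
  fixes G (structure)
  assumes pg: "profinite_group G T" and N: "N \<in> fin_quots G T"
    and d: "d \<in> Z2ts (G Mod N) (quot_top G N) H"
    and dB: "inflate (\<lambda>g. N #> g) G d \<in> B2ts G T H"
  shows "\<exists>M\<in>fin_quots G T. M \<subseteq> N \<and>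
           inflate (\<lambda>C. N <#> C) (G Mod M) d \<in> B2ts (G Mod M) (quot_top G M) H"
proof -
  note gr = profinite_groupD(1)[OF pg]
  obtain f where fP: "f \<in> carrier G \<rightarrow>\<^sub>E carrier H"
    and fC: "continuous_map T (discrete_topology (carrier H)) f"
    and cob: "\<forall>g\<in>carrier G. \<forall>h\<in>carrier G.
      inflate (\<lambda>g. N #> g) G d (g, h) = f g \<otimes>\<^bsub>H\<^esub> f h \<otimes>\<^bsub>H\<^esub> inv\<^bsub>H\<^esub> (f (g \<otimes> h))"
    using dB by (auto simp: B2ts_def)
  obtain M0 where M0: "M0 \<in> fin_quots G T"
    and f_factors: "\<forall>g\<in>carrier G. \<forall>g'\<in>carrier G. M0 #> g = M0 #> g' \<longrightarrow> f g = f g'"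
    using profinite_continuous_factors_rcos[OF pg fC] by blast
  define M where "M = M0 \<inter> N"
  have M: "M \<in> fin_quots G T" "M \<subseteq> N" "M \<subseteq> M0"
    using fin_quots_Int[OF gr M0 N] by (auto simp: M_def)
  have sub: "subgroup M G" "subgroup M0 G" "subgroup N G"
    using fin_quots_subgroup M(1) M0 N by auto
  let ?q = "\<lambda>g. M #> g"
  have surj: "?q ` carrier G = carrier (G Mod M)"
    by (simp add: carrier_Mod_eq_image_rcos)
  have fibres: "f x = f y" if "x \<in> carrier G" "y \<in> carrier G" "?q x = ?q y" for x y
    using f_factors rcos_eq_coarsen[OF gr sub(1,2) M(3) that] that(1,2) by blast
  have "f \<in> carrier G \<rightarrow> carrier H" using fP by (auto simp: PiE_iff)
  from factor_through_surj[OF surj fibres this]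
  obtain f' where f'P: "f' \<in> carrier (G Mod M) \<rightarrow>\<^sub>E carrier H"
    and f': "\<forall>g\<in>carrier G. f' (?q g) = f g"
    by blast
  let ?e = "inflate (\<lambda>C. N <#> C) (G Mod M) d"
  have "?e (?q g, ?q h) = f' (?q g) \<otimes>\<^bsub>H\<^esub> f' (?q h) \<otimes>\<^bsub>H\<^esub> inv\<^bsub>H\<^esub> (f' (?q (g \<otimes> h)))"
    if gh: "g \<in> carrier G" "h \<in> carrier G" for g h
  proof -
    have "?e (?q g, ?q h) = inflate (\<lambda>g. N #> g) G d (g, h)"
      using gh surj set_mult_rcos_coarsen[OF gr sub(1,3) M(2)] by (auto simp: inflate_def)
    then show ?thesis
      using gh cob f' monoid.m_closed[OF group.is_monoid[OF gr] gh] by simp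
  qed
  then have "?e \<in> B2ts (G Mod M) (quot_top G M) H"
    using B2ts_descend[OF rcos_hom_Mod[OF M(1)] surj Z2ts_inflate_set_mult[OF gr M(1) N M(2) d] f'P]
    by blast
  then show ?thesis using M by blast
qed

theorem mainTheorem9:
  fixes G :: "('g,'a) monoid_scheme" and T :: "'g topology" and H :: "('h,'b) monoid_scheme"
  assumes "profinite_group G T" and "comm_group H" and "finite (carrier H)"
  shows
    \<comment> \<open>inflation G \<rightarrow> G/N gives well-defined maps H^2_ts(G/N,H) \<rightarrow> H^2_ts(G,H)\<close>
    "(\<forall>N\<in>fin_quots G T. \<forall>c\<in>Z2ts (G Mod N) (quot_top G N) H.
        inflate (\<lambda>g. N #>\<^bsub>G\<^esub> g) G c \<in> Z2ts G T H)
   \<and> (\<forall>N\<in>fin_quots G T. \<forall>c\<in>B2ts (G Mod N) (quot_top G N) H.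
        inflate (\<lambda>g. N #>\<^bsub>G\<^esub> g) G c \<in> B2ts G T H)
    \<comment> \<open>the induced map from the direct limit is surjective\<close>
   \<and> (\<forall>c\<in>Z2ts G T H. \<exists>N\<in>fin_quots G T. \<exists>d\<in>Z2ts (G Mod N) (quot_top G N) H.
        cohomologous G T H (inflate (\<lambda>g. N #>\<^bsub>G\<^esub> g) G d) c)
    \<comment> \<open>and injective: a class on G/N dying on G already dies on some smaller finite quotient G/M\<close>
   \<and> (\<forall>N\<in>fin_quots G T. \<forall>d\<in>Z2ts (G Mod N) (quot_top G N) H.
        inflate (\<lambda>g. N #>\<^bsub>G\<^esub> g) G d \<in> B2ts G T H \<longrightarrow>
        (\<exists>M\<in>fin_quots G T. M \<subseteq> N \<and>
           inflate (\<lambda>C. set_mult G N C) (G Mod M) d \<in> B2ts (G Mod M) (quot_top G M) H))"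
proof -
  note pg = assms(1)
  note mon = group.is_monoid[OF profinite_groupD(1)[OF pg]] and tp = profinite_groupD(2)[OF pg]
  have Z2: "inflate (\<lambda>g. N #>\<^bsub>G\<^esub> g) G c \<in> Z2ts G T H"
    if "N \<in> fin_quots G T" "c \<in> Z2ts (G Mod N) (quot_top G N) H" for N c
    using Z2ts_inflate[OF mon rcos_hom_Mod[OF that(1)] continuous_map_rcos[OF pg that(1)] tp that(2)] .
  have B2: "inflate (\<lambda>g. N #>\<^bsub>G\<^esub> g) G c \<in> B2ts G T H"
    if "N \<in> fin_quots G T" "c \<in> B2ts (G Mod N) (quot_top G N) H" for N c
    using B2ts_inflate[OF mon rcos_hom_Mod[OF that(1)] continuous_map_rcos[OF pg that(1)] tp that(2)] .
  note surj = Z2ts_cohomologous_inflation[OF pg comm_group.axioms(2)[OF assms(2)]]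
  note inj = inflation_B2ts_descends[OF pg]
  show ?thesis
    by (intro conjI ballI impI) (simp_all add: Z2 B2 surj inj)
qed

end
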